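(* Let $(\lambda_k)_{k\ge1}$, $(\mu_k)_{k\ge1}$ be nonzero real numbers with $|\lambda_1|>|\mu_1|>|\lambda_2|>|\mu_2|>\dots>0$ and $\lambda_k\to0$, let $\sigma=\{\lambda_k^2:k\ge1\}\cup\{0\}$, and let $\Phi(z)=\prod_{k\ge1}\frac{z-\mu_k^2}{z-\lambda_k^2}$ for $z\in\mathbb{C}\setminus\sigma$. Then for all $z\in\mathbb{C}\setminus\sigma$ $$\Phi(z)=1-\sum_{n\ge1}\frac{a_n}{\lambda_n^2-z},\qquad\text{where}\quad a_n=(\lambda_n^2-\mu_n^2)\prod_{k\ne n}\frac{\lambda_n^2-\mu_k^2}{\lambda_n^2-\lambda_k^2},$$ with the series converging uniformly on compact subsets of $\mathbb{C}\setminus\sigma$. *)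

theory Defs
  imports "HOL-Analysis.Analysis"
begin

text \<open>Sequences are indexed from 0 (paper index k corresponds to k-1 here).\<close>

definition spec_set :: "(nat \<Rightarrow> real) \<Rightarrow> complex set" where
  "spec_set lam = {complex_of_real ((lam k)^2) | k. True} \<union> {0}"

definition Phi_factor :: "(nat \<Rightarrow> real) \<Rightarrow> (nat \<Rightarrow> real) \<Rightarrow> complex \<Rightarrow> nat \<Rightarrow> complex" where
  "Phi_factor lam mu z k = (z - complex_of_real ((mu k)^2)) / (z - complex_of_real ((lam k)^2))"

definition Phi :: "(nat \<Rightarrow> real) \<Rightarrow> (nat \<Rightarrow> real) \<Rightarrow> complex \<Rightarrow> complex" where
  "Phi lam mu z = (\<Prod>k. Phi_factor lam mu z k)"

definition coef_factor :: "(nat \<Rightarrow> real) \<Rightarrow> (nat \<Rightarrow> real) \<Rightarrow> nat \<Rightarrow> nat \<Rightarrow> real" where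
  "coef_factor lam mu n k =
     (if k = n then 1 else ((lam n)^2 - (mu k)^2) / ((lam n)^2 - (lam k)^2))"

definition coef :: "(nat \<Rightarrow> real) \<Rightarrow> (nat \<Rightarrow> real) \<Rightarrow> nat \<Rightarrow> real" where
  "coef lam mu n = ((lam n)^2 - (mu n)^2) * (\<Prod>k. coef_factor lam mu n k)"

end

(*
  Write x_k = lambda_k^2 and y_k = mu_k^2, so that x_0 > y_0 > x_1 > y_1 > ... > 0.
  For finitely many factors, partial fractions give
    prod_{k<N} (z - y_k)/(z - x_k) = 1 - sum_{n<N} a_{N,n}/(x_n - z),
  and interlacing makes every factor (x_n - y_k)/(x_n - x_k) of a_{N,n} positive, and at
  least 1 for k > n; hence 0 <= a_{N,n} increases to the weight a_n as N grows.
  At z = -1 the product is positive, so sum_{n<N} a_{N,n}/(x_n + 1) <= 1 and sum a_n < oo.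
  As x_n -> 0, for |z| >= d > 0 the terms a_n/(x_n - z) are eventually bounded by
  2 a_n/d: Tannery's theorem lets N -> oo in the finite identity, and the Weierstrass
  M-test gives uniform convergence away from 0.
*)

theory Submission
  imports Defs
begin

lemma prod_ratio_partial_fractions:
  fixes X Y :: "nat \<Rightarrow> 'a::field"
  assumes "inj_on X {..<N}" and "z \<notin> X ` {..<N}"
  shows "(\<Prod>k<N. (z - Y k) / (z - X k)) =
         1 + (\<Sum>n<N. (X n - Y n) * (\<Prod>k\<in>{..<N}-{n}. (X n - Y k) / (X n - X k)) / (z - X n))"
  using assms
proof (induction N arbitrary: z)
  case 0
  then show ?case by simp
next
  case (Suc N)
  define r where "r n = (X n - Y n) * (\<Prod>k\<in>{..<N}-{n}. (X n - Y k) / (X n - X k))" for n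
  define c where "c = X N - Y N"
  have inj: "inj_on X {..<N}"
    using Suc.prems(1) by (rule inj_on_subset) auto
  have X_ne: "X n \<noteq> X N" if "n < N" for n
    using Suc.prems(1) that by (auto dest: inj_onD)
  have z_ne: "z \<noteq> X n" if "n < Suc N" for n
    using Suc.prems(2) that by auto
  have IH_z: "(\<Prod>k<N. (z - Y k) / (z - X k)) = 1 + (\<Sum>n<N. r n / (z - X n))"
    unfolding r_def by (rule Suc.IH[OF inj]) (use z_ne less_SucI in blast)
  have IH_XN: "(\<Prod>k<N. (X N - Y k) / (X N - X k)) = 1 + (\<Sum>n<N. r n / (X N - X n))"
    unfolding r_def by (rule Suc.IH[OF inj]) (use X_ne in force)
  have term_split: "r n / (z - X n) * ((z - Y N) / (z - X N)) =
      r n * ((X n - Y N) / (X n - X N)) / (z - X n) + r n / (X N - X n) * (c / (z - X N))"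
    if "n < N" for n
  proof -
    have "X n - X N \<noteq> 0" "X N - X n \<noteq> 0" "z - X n \<noteq> 0" "z - X N \<noteq> 0"
      using X_ne[OF that] z_ne that by auto
    then show ?thesis
      by (simp add: c_def divide_simps) (simp add: algebra_simps)
  qed
  have new_coeffs: "(X n - Y n) * (\<Prod>k\<in>{..<Suc N}-{n}. (X n - Y k) / (X n - X k)) =
      (if n = N then c * (\<Prod>k<N. (X N - Y k) / (X N - X k))
       else r n * ((X n - Y N) / (X n - X N)))" if "n < Suc N" for n
  proof -
    have "{..<Suc N} - {N} = {..<N}" by auto
    moreover have "{..<Suc N} - {n} = insert N ({..<N} - {n})" if "n < N" using that by auto
    ultimately show ?thesis using \<open>n < Suc N\<close> by (auto simp: r_def c_def mult_ac)
  qed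
  have "(\<Prod>k<Suc N. (z - Y k) / (z - X k)) =
      (1 + (\<Sum>n<N. r n / (z - X n))) * ((z - Y N) / (z - X N))"
    by (simp add: IH_z)
  also have "\<dots> = (z - Y N) / (z - X N) + (\<Sum>n<N. r n / (z - X n) * ((z - Y N) / (z - X N)))"
    by (simp only: distrib_right mult_1_left sum_distrib_right)
  also have "\<dots> = (z - Y N) / (z - X N) + (\<Sum>n<N. r n * ((X n - Y N) / (X n - X N)) / (z - X n))
      + (\<Sum>n<N. r n / (X N - X n)) * (c / (z - X N))"
    unfolding sum_distrib_right add.assoc sum.distrib[symmetric]
    by (intro arg_cong2[where f = "(+)"] sum.cong refl term_split) simp
  also have "\<dots> = 1 + c * (\<Prod>k<N. (X N - Y k) / (X N - X k)) / (z - X N)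
      + (\<Sum>n<N. r n * ((X n - Y N) / (X n - X N)) / (z - X n))"
  proof -
    have "(z - Y N) / (z - X N) = 1 + c / (z - X N)"
      using z_ne[of N] by (simp add: c_def field_simps)
    then show ?thesis
      by (simp add: IH_XN ring_distribs add_divide_distrib ac_simps)
  qed
  also have "\<dots> = 1 + (\<Sum>n<Suc N.
      (X n - Y n) * (\<Prod>k\<in>{..<Suc N}-{n}. (X n - Y k) / (X n - X k)) / (z - X n))"
    by (simp add: new_coeffs)
  finally show ?case .
qed

lemma eventually_norm_div_diff_le:
  fixes x c :: "nat \<Rightarrow> 'a::real_normed_field"
  assumes "x \<longlonglongrightarrow> 0" and "d > 0"
  shows "\<forall>\<^sub>F n in sequentially. \<forall>z. d \<le> norm z \<longrightarrow> norm (c n / (x n - z)) \<le> 2 / d * norm (c n)"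
proof -
  have "\<forall>\<^sub>F n in sequentially. norm (x n) < d / 2"
    using tendstoD[OF assms(1), of "d / 2"] assms(2) by simp
  then show ?thesis
  proof eventually_elim
    case (elim n)
    show ?case
    proof (intro allI impI)
      fix z :: 'a
      assume "d \<le> norm z"
      then have "d / 2 \<le> norm (x n - z)"
        using elim norm_triangle_ineq2[of z "x n"] by (simp add: norm_minus_commute)
      moreover have "0 < norm (x n - z)"
        using calculation assms(2) by linarith
      ultimately have "norm (c n) / norm (x n - z) \<le> norm (c n) / (d / 2)"
        using assms(2) by (intro divide_left_mono) auto
      then show "norm (c n / (x n - z)) \<le> 2 / d * norm (c n)"
        by (simp add: norm_divide mult.commute)
    qed
  qed
qed

lemma summable_norm_div_diff:
  fixes x c :: "nat \<Rightarrow> 'a::real_normed_field"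
  assumes "x \<longlonglongrightarrow> 0" and "summable (\<lambda>n. norm (c n))" and "z \<noteq> 0"
  shows "summable (\<lambda>n. norm (c n / (x n - z)))"
proof (rule summable_comparison_test_ev[OF _ summable_mult[OF assms(2)]])
  show "\<forall>\<^sub>F n in sequentially. norm (norm (c n / (x n - z))) \<le> 2 / norm z * norm (c n)"
    using eventually_norm_div_diff_le[OF assms(1), of "norm z" c] assms(3)
    by (auto elim: eventually_mono)
qed

lemma uniform_limit_sum_div_diff:
  fixes x c :: "nat \<Rightarrow> 'a::{real_normed_field, banach}"
  assumes "x \<longlonglongrightarrow> 0" and "summable (\<lambda>n. norm (c n))" and "closed K" and "0 \<notin> K"
  shows "uniform_limit K (\<lambda>N z. \<Sum>n<N. c n / (x n - z)) (\<lambda>z. \<Sum>n. c n / (x n - z)) sequentially"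
proof -
  obtain d where "d > 0" and "ball 0 d \<subseteq> - K"
    using open_contains_ball[of "- K"] assms(3,4) by auto
  then have d: "d \<le> norm z" if "z \<in> K" for z
    using that by (force simp: subset_iff)
  show ?thesis
  proof (rule Weierstrass_m_test_ev[OF _ summable_mult[OF assms(2)]])
    show "\<forall>\<^sub>F n in sequentially. \<forall>z\<in>K. norm (c n / (x n - z)) \<le> 2 / d * norm (c n)"
      using eventually_norm_div_diff_le[OF assms(1) \<open>d > 0\<close>, of c] d
      by (auto elim: eventually_mono)
  qed
qed

locale interlacing =
  fixes x y :: "nat \<Rightarrow> real"
  assumes y_less_x: "y k < x k"
    and x_Suc_less_y: "x (Suc k) < y k"
    and x_tendsto_0: "x \<longlonglongrightarrow> 0"
begin

lemma x_strict_antimono: "m < n \<Longrightarrow> x n < x m"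
  using lift_Suc_mono_less[of "\<lambda>k. - x k"] x_Suc_less_y y_less_x
  by (meson less_trans neg_less_iff_less)

lemma x_antimono: "m \<le> n \<Longrightarrow> x n \<le> x m"
  using x_strict_antimono by (cases "m = n") (auto intro: less_imp_le)

lemma inj_x: "inj x"
  by (metis injI linorder_cases x_strict_antimono less_irrefl)

lemma x_pos: "0 < x k"
proof -
  have "0 \<le> x (Suc k)"
    using decseq_ge[OF _ x_tendsto_0] x_antimono by (simp add: decseq_def)
  then show ?thesis
    using x_strict_antimono[of k "Suc k"] by simp
qed

lemma y_pos: "0 < y k"
  using x_pos[of "Suc k"] x_Suc_less_y[of k] by simp

lemma summable_x_minus_y: "summable (\<lambda>k. x k - y k)"
proof (rule summable_comparison_test[OF _ telescope_summable'[OF x_tendsto_0]])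
  show "\<exists>N. \<forall>n\<ge>N. norm (x n - y n) \<le> x n - x (Suc n)"
    using y_less_x x_Suc_less_y by (intro exI[of _ 0]) (auto simp: less_imp_le)
qed

definition weight_factor :: "nat \<Rightarrow> nat \<Rightarrow> real" where
  "weight_factor n k = (if k = n then 1 else (x n - y k) / (x n - x k))"

definition partial_weight :: "nat \<Rightarrow> nat \<Rightarrow> real" where
  "partial_weight N n = (x n - y n) * (\<Prod>k<N. weight_factor n k)"

definition weight :: "nat \<Rightarrow> real" where
  "weight n = (x n - y n) * (\<Prod>k. weight_factor n k)"

lemma weight_factor_pos: "0 < weight_factor n k"
proof (cases k n rule: linorder_cases)
  case less
  then have "x n \<le> x (Suc k)"
    by (intro x_antimono) simp
  then show ?thesis
    using less x_strict_antimono[of k n] x_Suc_less_y[of k]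
    by (auto simp: weight_factor_def intro!: divide_neg_neg)
next
  case greater
  then show ?thesis
    using x_strict_antimono[of n k] y_less_x[of k] by (auto simp: weight_factor_def)
qed (simp add: weight_factor_def)

lemma weight_factor_ge_1: "n < k \<Longrightarrow> 1 \<le> weight_factor n k"
  using x_strict_antimono[of n k] y_less_x[of k] by (auto simp: weight_factor_def)

lemma convergent_prod_weight_factor: "convergent_prod (weight_factor n)"
proof (rule abs_convergent_prod_imp_convergent_prod, rule summable_imp_abs_convergent_prod)
  define gap where "gap = x n - x (Suc n)"
  have "gap > 0"
    using x_strict_antimono[of n "Suc n"] by (simp add: gap_def)
  have "norm (weight_factor n k - 1) \<le> (x k - y k) / gap" if "n < k" for k
  proof -
    have "weight_factor n k - 1 = (x k - y k) / (x n - x k)"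
      using that x_strict_antimono[of n k] by (simp add: weight_factor_def field_simps)
    moreover have "(x k - y k) / (x n - x k) \<le> (x k - y k) / gap"
      using y_less_x[of k] x_antimono[of "Suc n" k] that \<open>gap > 0\<close>
      by (intro divide_left_mono) (auto simp: gap_def)
    ultimately show ?thesis
      using y_less_x[of k] x_strict_antimono[of n k] that by simp
  qed
  then have "\<forall>\<^sub>F k in sequentially. norm (norm (weight_factor n k - 1)) \<le> (x k - y k) / gap"
    by (auto simp: eventually_at_top_linorder intro!: exI[of _ "Suc n"])
  then show "summable (\<lambda>k. norm (weight_factor n k - 1))"
    by (rule summable_comparison_test_ev) (intro summable_divide summable_x_minus_y)
qed

lemma partial_weight_tendsto: "(\<lambda>N. partial_weight N n) \<longlonglongrightarrow> weight n"
  unfolding partial_weight_def weight_def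
  by (intro tendsto_mult_left has_prod_imp_tendsto' convergent_prod_has_prod
      convergent_prod_weight_factor)

lemma partial_weight_nonneg: "0 \<le> partial_weight N n"
  unfolding partial_weight_def
  using y_less_x[of n] weight_factor_pos
  by (intro mult_nonneg_nonneg prod_nonneg) (auto intro: less_imp_le)

lemma partial_weight_mono:
  assumes "n < N" and "N \<le> M"
  shows "partial_weight N n \<le> partial_weight M n"
  using assms(2)
proof (induction M rule: dec_induct)
  case (step M)
  have "partial_weight M n * 1 \<le> partial_weight M n * weight_factor n M"
    using partial_weight_nonneg weight_factor_ge_1[of n M] assms(1) step.hyps
    by (intro mult_left_mono) auto
  then show ?case
    using step.IH by (simp add: partial_weight_def)
qed simp

lemma partial_weight_le_weight: "n < N \<Longrightarrow> partial_weight N n \<le> weight n"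
  by (rule LIMSEQ_le_const[OF partial_weight_tendsto]) (auto intro: partial_weight_mono)

lemma weight_nonneg: "0 \<le> weight n"
  by (rule LIMSEQ_le_const[OF partial_weight_tendsto]) (auto intro: partial_weight_nonneg)

lemma prod_factors_eq_partial_fractions:
  fixes z :: "'a::real_field"
  assumes "\<And>k. k < N \<Longrightarrow> z \<noteq> of_real (x k)"
  shows "(\<Prod>k<N. (z - of_real (y k)) / (z - of_real (x k))) =
         1 - (\<Sum>n<N. of_real (partial_weight N n) / (of_real (x n) - z))"
proof -
  define X Y where "X k = (of_real (x k) :: 'a)" and "Y k = (of_real (y k) :: 'a)" for k
  have weight_term: "(X n - Y n) * (\<Prod>k\<in>{..<N}-{n}. (X n - Y k) / (X n - X k)) / (z - X n)
      = - (of_real (partial_weight N n) / (X n - z))" for n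
  proof -
    have "(\<Prod>k<N. weight_factor n k) = (\<Prod>k\<in>{..<N}-{n}. (x n - y k) / (x n - x k))"
      by (simp add: weight_factor_def prod.If_cases Diff_eq)
    then show ?thesis
      by (simp add: X_def Y_def partial_weight_def of_real_prod minus_divide_right)
  qed
  have "inj_on X {..<N}"
    using inj_x by (auto simp: X_def inj_on_def dest: injD)
  then have "(\<Prod>k<N. (z - Y k) / (z - X k)) =
      1 + (\<Sum>n<N. (X n - Y n) * (\<Prod>k\<in>{..<N}-{n}. (X n - Y k) / (X n - X k)) / (z - X n))"
    by (rule prod_ratio_partial_fractions) (use assms in \<open>auto simp: X_def\<close>)
  also have "\<dots> = 1 - (\<Sum>n<N. of_real (partial_weight N n) / (X n - z))"
    by (simp add: weight_term sum_negf)
  finally show ?thesis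
    by (simp add: X_def Y_def)
qed

lemma sum_partial_weight_le: "(\<Sum>n<N. partial_weight N n / (x n + 1)) \<le> 1"
proof -
  have "0 \<le> (\<Prod>k<N. (-1 - y k) / (-1 - x k))"
  proof (intro prod_nonneg ballI divide_nonpos_nonpos)
    show "-1 - y k \<le> 0" "-1 - x k \<le> 0" for k
      using x_pos[of k] y_pos[of k] by auto
  qed
  also have "\<dots> = 1 - (\<Sum>n<N. partial_weight N n / (x n + 1))"
  proof -
    have "-1 \<noteq> x k" for k
      using x_pos[of k] by simp
    then show ?thesis
      using prod_factors_eq_partial_fractions[of N "-1 :: real"] by (simp add: add.commute)
  qed
  finally show ?thesis by simp
qed

lemma sum_weight_div_le: "(\<Sum>n<M. weight n / (x n + 1)) \<le> 1"
proof (rule LIMSEQ_le_const2)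
  show "(\<lambda>N. \<Sum>n<M. partial_weight N n / (x n + 1)) \<longlonglongrightarrow> (\<Sum>n<M. weight n / (x n + 1))"
    using x_pos by (intro tendsto_sum tendsto_divide tendsto_const partial_weight_tendsto)
      (auto simp: add_pos_pos less_imp_neq[symmetric])
  have "(\<Sum>n<M. partial_weight N n / (x n + 1)) \<le> 1" if "M \<le> N" for N
  proof -
    have "(\<Sum>n<M. partial_weight N n / (x n + 1)) \<le> (\<Sum>n<N. partial_weight N n / (x n + 1))"
      using that partial_weight_nonneg x_pos
      by (intro sum_mono2) (auto intro!: divide_nonneg_pos add_pos_pos)
    also have "\<dots> \<le> 1"
      by (rule sum_partial_weight_le)
    finally show ?thesis .
  qed
  then show "\<exists>N. \<forall>N'\<ge>N. (\<Sum>n<M. partial_weight N' n / (x n + 1)) \<le> 1"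
    by blast
qed

lemma summable_weight: "summable weight"
proof -
  have "summable (\<lambda>n. weight n / (x n + 1))"
  proof (rule summableI_nonneg_bounded[where x = 1])
    show "0 \<le> weight n / (x n + 1)" for n
      using weight_nonneg[of n] x_pos[of n] by simp
  qed (rule sum_weight_div_le)
  then have "summable (\<lambda>n. (x 0 + 1) * (weight n / (x n + 1)))"
    by (rule summable_mult)
  moreover have "norm (weight n) \<le> (x 0 + 1) * (weight n / (x n + 1))" for n
  proof -
    have "weight n = (x n + 1) * (weight n / (x n + 1))"
      using x_pos[of n] by simp
    also have "\<dots> \<le> (x 0 + 1) * (weight n / (x n + 1))"
      using x_antimono[of 0 n] x_pos[of n] weight_nonneg[of n] by (intro mult_right_mono) auto
    finally show ?thesis
      using weight_nonneg[of n] by simp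
  qed
  ultimately show ?thesis
    by (rule summable_comparison_test'[where N = 0])
qed

lemma of_real_x_tendsto_0: "(\<lambda>k. of_real (x k) :: 'a::real_normed_algebra_1) \<longlonglongrightarrow> 0"
  using tendsto_of_real[OF x_tendsto_0] by simp

lemma convergent_prod_factors:
  fixes z :: "'a::{real_normed_field, banach}"
  assumes "z \<noteq> 0" and "z \<notin> range (\<lambda>k. of_real (x k))"
  shows "convergent_prod (\<lambda>k. (z - of_real (y k)) / (z - of_real (x k)))"
proof (rule abs_convergent_prod_imp_convergent_prod, rule summable_imp_abs_convergent_prod)
  have "(z - of_real (y k)) / (z - of_real (x k)) - 1 = of_real (y k - x k) / (of_real (x k) - z)"
    for k
  proof -
    have "z - of_real (x k) \<noteq> 0"
      using assms(2) by auto
    then show ?thesis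
      by (simp add: field_simps)
  qed
  moreover have "summable (\<lambda>k. norm (of_real (y k - x k) / (of_real (x k) - z) :: 'a))"
  proof (rule summable_norm_div_diff[OF of_real_x_tendsto_0 _ assms(1)])
    have "norm (of_real (y k - x k) :: 'a) = x k - y k" for k
      using y_less_x[of k] by (simp only: norm_of_real)
    then show "summable (\<lambda>k. norm (of_real (y k - x k) :: 'a))"
      using summable_x_minus_y by simp
  qed
  ultimately show "summable (\<lambda>k. norm ((z - of_real (y k)) / (z - of_real (x k)) - 1))"
    by simp
qed

lemma summable_norm_of_real_weight:
  "summable (\<lambda>n. norm (of_real (weight n) :: 'a::real_normed_algebra_1))"
  using summable_weight weight_nonneg by simp

lemma sums_weight_div:
  fixes z :: "'a::{real_normed_field, banach}"
  assumes "z \<noteq> 0" and "z \<notin> range (\<lambda>k. of_real (x k))"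
  shows "(\<lambda>n. of_real (weight n) / (of_real (x n) - z))
           sums (1 - (\<Prod>k. (z - of_real (y k)) / (z - of_real (x k))))"
proof -
  define b where "b n = of_real (weight n) / (of_real (x n) - z)" for n
  define a where "a n N = (if n < N then of_real (partial_weight N n) / (of_real (x n) - z) else 0)"
    for n N
  have "summable (\<lambda>n. norm (b n)) \<and> (\<lambda>N. \<Sum>n. a n N) \<longlonglongrightarrow> (\<Sum>n. b n)"
  proof (rule conjunct2[OF tannerys_theorem[where M = "\<lambda>n. norm (b n)"]])
    show "(\<lambda>N. a n N) \<longlonglongrightarrow> b n" for n
    proof (rule Lim_transform_eventually)
      show "(\<lambda>N. of_real (partial_weight N n) / (of_real (x n) - z)) \<longlonglongrightarrow> b n"
        unfolding b_def using assms(2)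
        by (intro tendsto_divide tendsto_of_real partial_weight_tendsto tendsto_const) auto
      show "\<forall>\<^sub>F N in sequentially. of_real (partial_weight N n) / (of_real (x n) - z) = a n N"
        using eventually_gt_at_top[of n] by eventually_elim (simp add: a_def)
    qed
    have "norm (a n N) \<le> norm (b n)" for n N
      using partial_weight_le_weight[of n N] partial_weight_nonneg[of N n]
      by (auto simp: a_def b_def norm_divide intro: divide_right_mono)
    then show "\<forall>\<^sub>F (n, N) in at_top \<times>\<^sub>F sequentially. norm (a n N) \<le> norm (b n)"
      by (intro always_eventually) auto
    show "summable (\<lambda>n. norm (b n))"
      unfolding b_def
      by (rule summable_norm_div_diff[OF of_real_x_tendsto_0 summable_norm_of_real_weight assms(1)])
  qed simp
  moreover have "(\<Sum>n. a n N) = 1 - (\<Prod>k<N. (z - of_real (y k)) / (z - of_real (x k)))" for N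
  proof -
    have "(\<Sum>n. a n N) = (\<Sum>n<N. of_real (partial_weight N n) / (of_real (x n) - z))"
      by (subst suminf_finite[of "{..<N}"]) (auto simp: a_def)
    also have "\<dots> = 1 - (\<Prod>k<N. (z - of_real (y k)) / (z - of_real (x k)))"
      using prod_factors_eq_partial_fractions[of N z] assms(2) by force
    finally show ?thesis .
  qed
  moreover have "(\<lambda>N. 1 - (\<Prod>k<N. (z - of_real (y k)) / (z - of_real (x k))))
      \<longlonglongrightarrow> 1 - (\<Prod>k. (z - of_real (y k)) / (z - of_real (x k)))"
    using convergent_prod_factors[OF assms]
    by (intro tendsto_diff tendsto_const has_prod_imp_tendsto' convergent_prod_has_prod)
  ultimately have "summable b" and "(\<Sum>n. b n) = 1 - (\<Prod>k. (z - of_real (y k)) / (z - of_real (x k)))"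
    using summable_norm_cancel LIMSEQ_unique by auto
  then show ?thesis
    unfolding b_def by (simp add: sums_iff)
qed

lemma uniform_limit_sum_weight_div:
  fixes K :: "'a::{real_normed_field, banach} set"
  assumes "closed K" and "0 \<notin> K"
  shows "uniform_limit K (\<lambda>N z. \<Sum>n<N. of_real (weight n) / (of_real (x n) - z))
           (\<lambda>z. \<Sum>n. of_real (weight n) / (of_real (x n) - z)) sequentially"
  by (rule uniform_limit_sum_div_diff[OF of_real_x_tendsto_0 summable_norm_of_real_weight assms])

end

theorem lemma4p7:
  fixes lam mu :: "nat \<Rightarrow> real"
  assumes inter1: "\<And>k. \<bar>lam k\<bar> > \<bar>mu k\<bar>"
      and inter2: "\<And>k. \<bar>mu k\<bar> > \<bar>lam (Suc k)\<bar>"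
      and pos: "\<And>k. \<bar>mu k\<bar> > 0"
      and lam_nz: "\<And>k. lam k \<noteq> 0"
      and mu_nz: "\<And>k. mu k \<noteq> 0"
      and lim: "lam \<longlonglongrightarrow> 0"
  shows "(\<forall>n. convergent_prod (coef_factor lam mu n))
    \<and> (\<forall>z. z \<notin> spec_set lam \<longrightarrow>
          convergent_prod (Phi_factor lam mu z)
          \<and> (\<lambda>n. complex_of_real (coef lam mu n) / (complex_of_real ((lam n)^2) - z))
               sums (1 - Phi lam mu z))
    \<and> (\<forall>K. compact K \<and> K \<inter> spec_set lam = {} \<longrightarrow>
          uniform_limit K
            (\<lambda>N z. \<Sum>n<N. complex_of_real (coef lam mu n) / (complex_of_real ((lam n)^2) - z))
            (\<lambda>z. \<Sum>n. complex_of_real (coef lam mu n) / (complex_of_real ((lam n)^2) - z))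
            sequentially)"
proof -
  have abs_less_iff_square: "\<bar>a\<bar> < \<bar>b\<bar> \<longleftrightarrow> a^2 < b^2" for a b :: real
    by (metis abs_le_square_iff not_le)
  interpret interlacing "\<lambda>k. (lam k)^2" "\<lambda>k. (mu k)^2"
    using inter1 inter2 tendsto_power[OF lim, of 2]
    by unfold_locales (simp_all add: abs_less_iff_square)
  have coef: "coef_factor lam mu = weight_factor" "coef lam mu = weight"
    by (simp_all add: fun_eq_iff coef_factor_def weight_factor_def coef_def weight_def)
  have Phi: "Phi_factor lam mu z = (\<lambda>k. (z - of_real ((mu k)^2)) / (z - of_real ((lam k)^2)))"
    "Phi lam mu z = (\<Prod>k. (z - of_real ((mu k)^2)) / (z - of_real ((lam k)^2)))" for z
    by (simp_all add: Phi_def Phi_factor_def fun_eq_iff)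
  have spec: "z \<notin> spec_set lam \<longleftrightarrow> z \<noteq> 0 \<and> z \<notin> range (\<lambda>k. of_real ((lam k)^2))" for z
    by (auto simp: spec_set_def)
  show ?thesis
    unfolding coef Phi
  proof (intro conjI allI impI)
    show "convergent_prod (weight_factor n)" for n
      by (rule convergent_prod_weight_factor)
    fix z
    assume "z \<notin> spec_set lam"
    then have z: "z \<noteq> 0" "z \<notin> range (\<lambda>k. of_real ((lam k)^2))"
      by (simp_all add: spec)
    show "convergent_prod (\<lambda>k. (z - of_real ((mu k)^2)) / (z - of_real ((lam k)^2)))"
      by (rule convergent_prod_factors[OF z])
    show "(\<lambda>n. of_real (weight n) / (of_real ((lam n)^2) - z))
            sums (1 - (\<Prod>k. (z - of_real ((mu k)^2)) / (z - of_real ((lam k)^2))))"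
      by (rule sums_weight_div[OF z])
  next
    show "uniform_limit K (\<lambda>N z. \<Sum>n<N. of_real (weight n) / (of_real ((lam n)^2) - z))
            (\<lambda>z. \<Sum>n. of_real (weight n) / (of_real ((lam n)^2) - z)) sequentially"
      if "compact K \<and> K \<inter> spec_set lam = {}" for K
      using that
      by (intro uniform_limit_sum_weight_div) (auto simp: spec_set_def compact_imp_closed)
  qed
qed

end
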